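(* Let $f$ be a continuous map on a compact metric space $\mathbf{M}$, and let $(U_n)$ be a nested sequence of subsets ($U_{n+1}\subset U_n$, not necessarily open) such that $\bigcap_nU_n=\bigcap_n\overline{U_n}=:\Lambda$. Then $\pi(U_n)\to\infty$ if and only if $\Lambda$ contains no periodic point and $\Lambda$ is contained in a fundamental domain of $f$, i.e., $\Lambda$ intersects every orbit at most once.
   Context: For $U\subset\mathbf{M}$, the period of $U$ is $\pi(U)=\min\{k>0:f^{-k}U\cap U\neq\emptyset\}$ (with $\pi(U)=\infty$ if no such $k$ exists). The orbit of $x$ is $\{f^k(x):k\ge0\}$. *)

theory Defs
  imports "HOL-Analysis.Analysis"
begin

definition period :: "('a \<Rightarrow> 'a) \<Rightarrow> 'a set \<Rightarrow> enat" where
  "period f U =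
     (if \<exists>k>0. (f ^^ k) -` U \<inter> U \<noteq> {}
      then enat (LEAST k. k > 0 \<and> (f ^^ k) -` U \<inter> U \<noteq> {})
      else \<infinity>)"

definition orbit :: "('a \<Rightarrow> 'a) \<Rightarrow> 'a \<Rightarrow> 'a set" where
  "orbit f x = {(f ^^ k) x | k. k \<ge> 0}"

definition periodic_point :: "('a \<Rightarrow> 'a) \<Rightarrow> 'a \<Rightarrow> bool" where
  "periodic_point f x \<longleftrightarrow> (\<exists>k>0. (f ^^ k) x = x)"

end

theory Submission
  imports Defs
begin

text \<open>Both conditions on \<open>\<Lambda>\<close> together say exactly that \<open>\<Lambda>\<close> itself has infinite period.
  If some \<open>y \<in> \<Lambda>\<close> has \<open>f\<^sup>k y \<in> \<Lambda>\<close>, then \<open>\<pi>(U\<^sub>n) \<le> k\<close> for all \<open>n\<close>, since \<open>\<Lambda> \<subseteq> U\<^sub>n\<close>.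
  Conversely, if every \<open>U\<^sub>n\<close> contains a point \<open>u\<^sub>n\<close> with \<open>f\<^sup>k u\<^sub>n \<in> U\<^sub>n\<close>, a limit point \<open>y\<close>
  of \<open>(u\<^sub>n)\<close> and, by continuity, \<open>f\<^sup>k y\<close> lie in every \<open>closure U\<^sub>n\<close>, hence in \<open>\<Lambda>\<close>.
  So for each \<open>k\<close>, and hence for all \<open>k \<le> K\<close> at once, eventually no point of \<open>U\<^sub>n\<close> returns
  to \<open>U\<^sub>n\<close> after \<open>k\<close> steps, i.e. \<open>\<pi>(U\<^sub>n) > K\<close>.\<close>

lemma period_le_enat:
  assumes "k > 0" "u \<in> U" "(f ^^ k) u \<in> U"
  shows "period f U \<le> enat k"
proof -
  have returns: "\<exists>k>0. (f ^^ k) -` U \<inter> U \<noteq> {}" using assms by blast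
  have "(LEAST k. k > 0 \<and> (f ^^ k) -` U \<inter> U \<noteq> {}) \<le> k"
    by (rule Least_le) (use assms in blast)
  then show ?thesis using returns unfolding period_def by simp
qed

lemma period_enatD:
  assumes "period f U = enat k"
  shows "k > 0 \<and> (\<exists>u\<in>U. (f ^^ k) u \<in> U)"
proof -
  have returns: "\<exists>k>0. (f ^^ k) -` U \<inter> U \<noteq> {}"
    using assms unfolding period_def by (metis enat.distinct(2))
  let ?m = "LEAST k. k > 0 \<and> (f ^^ k) -` U \<inter> U \<noteq> {}"
  have "k = ?m" using returns assms unfolding period_def by simp
  moreover have "?m > 0 \<and> (f ^^ ?m) -` U \<inter> U \<noteq> {}"
    by (rule LeastI_ex) (use returns in blast)
  ultimately show ?thesis by blast
qed

lemma enat_less_period: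
  assumes "\<And>k u. 0 < k \<Longrightarrow> k \<le> K \<Longrightarrow> u \<in> U \<Longrightarrow> (f ^^ k) u \<notin> U"
  shows "enat K < period f U"
proof (cases "period f U")
  case (enat m)
  then obtain u where "m > 0" "u \<in> U" "(f ^^ m) u \<in> U" using period_enatD by blast
  then have "K < m" using assms not_le by blast
  then show ?thesis using enat by simp
qed simp

lemma period_eq_infinity_iff:
  "period f U = \<infinity> \<longleftrightarrow> (\<forall>k>0. \<forall>u\<in>U. (f ^^ k) u \<notin> U)"
proof -
  have "period f U = \<infinity> \<longleftrightarrow> \<not> (\<exists>k>0. (f ^^ k) -` U \<inter> U \<noteq> {})"
    by (simp add: period_def)
  then show ?thesis by blast
qed

lemma period_eq_infinity_iff_fundamental_domain:
  assumes "\<Lambda> \<subseteq> M"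
  shows "period f \<Lambda> = \<infinity> \<longleftrightarrow>
         (\<forall>x\<in>\<Lambda>. \<not> periodic_point f x) \<and>
         (\<forall>x\<in>M. \<forall>y z. y \<in> orbit f x \<inter> \<Lambda> \<and> z \<in> orbit f x \<inter> \<Lambda> \<longrightarrow> y = z)"
proof
  assume "period f \<Lambda> = \<infinity>"
  then have no_return: "(f ^^ k) y \<notin> \<Lambda>" if "k > 0" "y \<in> \<Lambda>" for k y
    using that by (simp add: period_eq_infinity_iff)
  have later_point: "z = y"
    if "y = (f ^^ a) x" "z = (f ^^ b) x" "a \<le> b" "y \<in> \<Lambda>" "z \<in> \<Lambda>" for x y z a b
  proof -
    have "z = (f ^^ (b - a)) y"
      using that by (metis funpow_add le_add_diff_inverse2 comp_apply)
    then show ?thesis using no_return that by (cases "a = b") auto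
  qed
  show "(\<forall>x\<in>\<Lambda>. \<not> periodic_point f x) \<and>
        (\<forall>x\<in>M. \<forall>y z. y \<in> orbit f x \<inter> \<Lambda> \<and> z \<in> orbit f x \<inter> \<Lambda> \<longrightarrow> y = z)"
  proof safe
    fix x assume "x \<in> \<Lambda>" "periodic_point f x"
    then obtain k where "k > 0" "(f ^^ k) x = x" unfolding periodic_point_def by blast
    then show False using no_return \<open>x \<in> \<Lambda>\<close> by metis
  next
    fix x y z assume "y \<in> orbit f x" "y \<in> \<Lambda>" "z \<in> orbit f x" "z \<in> \<Lambda>"
    moreover obtain a b where "y = (f ^^ a) x" "z = (f ^^ b) x"
      using \<open>y \<in> orbit f x\<close> \<open>z \<in> orbit f x\<close> unfolding orbit_def by blast
    ultimately show "y = z"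
      using later_point[of y a x z b] later_point[of z b x y a] nat_le_linear[of a b] by blast
  qed
next
  assume fundamental: "(\<forall>x\<in>\<Lambda>. \<not> periodic_point f x) \<and>
         (\<forall>x\<in>M. \<forall>y z. y \<in> orbit f x \<inter> \<Lambda> \<and> z \<in> orbit f x \<inter> \<Lambda> \<longrightarrow> y = z)"
  have "(f ^^ k) y \<notin> \<Lambda>" if "k > 0" "y \<in> \<Lambda>" for k y
  proof
    assume "(f ^^ k) y \<in> \<Lambda>"
    moreover have "y \<in> orbit f y" "(f ^^ k) y \<in> orbit f y"
      unfolding orbit_def by (auto intro: exI[of _ 0])
    ultimately have "(f ^^ k) y = y" using fundamental that assms by blast
    then show False using fundamental that unfolding periodic_point_def by blast
  qed
  then show "period f \<Lambda> = \<infinity>" by (simp add: period_eq_infinity_iff)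
qed

lemma funpow_image_subset:
  assumes "f ` M \<subseteq> M"
  shows "(f ^^ k) ` M \<subseteq> M"
  by (induction k) (use assms in auto)

lemma continuous_on_funpow:
  assumes "continuous_on M f" "f ` M \<subseteq> M"
  shows "continuous_on M (f ^^ k)"
proof (induction k)
  case (Suc k)
  have "continuous_on M (f \<circ> f ^^ k)"
    using Suc continuous_on_subset[OF assms(1) funpow_image_subset[OF assms(2)]]
    by (rule continuous_on_compose)
  then show ?case by simp
qed (simp add: continuous_on_id)

lemma return_in_Inter_closure:
  fixes U :: "nat \<Rightarrow> 'a::metric_space set"
  assumes "compact M" "continuous_on M g" "\<And>n. U n \<subseteq> M" "decseq U"
    and returns: "\<And>n. \<exists>u\<in>U n. g u \<in> U n"
  shows "\<exists>y\<in>(\<Inter>n. closure (U n)). g y \<in> (\<Inter>n. closure (U n))"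
proof -
  obtain u where u: "\<And>n. u n \<in> U n" "\<And>n. g (u n) \<in> U n" using returns by metis
  then have "\<forall>n. u n \<in> M" using assms(3) by blast
  moreover have "seq_compact M" using assms(1) by (rule compact_imp_seq_compact)
  ultimately obtain y r where y: "y \<in> M" "strict_mono r" "(u \<circ> r) \<longlonglongrightarrow> y"
    using seq_compactE by metis
  have gy: "(\<lambda>n. g ((u \<circ> r) n)) \<longlonglongrightarrow> g y"
    by (rule continuous_on_tendsto_compose[OF assms(2) y(3) y(1)]) (use \<open>\<forall>n. u n \<in> M\<close> in auto)
  have eventually_in: "\<forall>\<^sub>F n in sequentially.
      (u \<circ> r) n \<in> closure (U N) \<and> g ((u \<circ> r) n) \<in> closure (U N)" for N
  proof (rule eventually_sequentiallyI)
    fix n assume "N \<le> n"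
    then have "N \<le> r n" using seq_suble[OF y(2), of n] by linarith
    then have "U (r n) \<subseteq> closure (U N)"
      using \<open>decseq U\<close> closure_subset unfolding decseq_def by blast
    then show "(u \<circ> r) n \<in> closure (U N) \<and> g ((u \<circ> r) n) \<in> closure (U N)" using u by auto
  qed
  have "y \<in> closure (U N)" for N
    by (rule Lim_in_closed_set[OF closed_closure _ _ y(3)])
       (use eventually_in[of N] in \<open>auto elim: eventually_mono\<close>)
  moreover have "g y \<in> closure (U N)" for N
    by (rule Lim_in_closed_set[OF closed_closure _ _ gy])
       (use eventually_in[of N] in \<open>auto elim: eventually_mono\<close>)
  ultimately show ?thesis by blast
qed

lemma tendsto_period_infinity_iff:
  fixes U :: "nat \<Rightarrow> 'a::metric_space set"
  assumes "compact M" "continuous_on M f" "f ` M \<subseteq> M" "\<And>n. U n \<subseteq> M" "decseq U"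
    and closure_Inter: "(\<Inter>n. U n) = (\<Inter>n. closure (U n))"
  shows "(\<lambda>n. period f (U n)) \<longlonglongrightarrow> \<infinity> \<longleftrightarrow> period f (\<Inter>n. U n) = \<infinity>"
proof
  assume lim: "(\<lambda>n. period f (U n)) \<longlonglongrightarrow> \<infinity>"
  show "period f (\<Inter>n. U n) = \<infinity>"
  proof (rule ccontr)
    assume "period f (\<Inter>n. U n) \<noteq> \<infinity>"
    then obtain k y where "k > 0" "y \<in> (\<Inter>n. U n)" "(f ^^ k) y \<in> (\<Inter>n. U n)"
      using period_enatD by (metis not_infinity_eq)
    then have "period f (U n) \<le> enat k" for n
      by (intro period_le_enat) auto
    moreover obtain n where "enat k < period f (U n)"
      using lim by (auto simp: order_tendsto_iff eventually_sequentially)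
    ultimately show False by (simp add: not_le[symmetric])
  qed
next
  assume "period f (\<Inter>n. U n) = \<infinity>"
  then have no_return: "(f ^^ k) y \<notin> (\<Inter>n. closure (U n))"
    if "k > 0" "y \<in> (\<Inter>n. closure (U n))" for k y
    using that closure_Inter by (simp add: period_eq_infinity_iff)
  have eventually_no_return: "\<forall>\<^sub>F n in sequentially. \<forall>u\<in>U n. (f ^^ k) u \<notin> U n"
    if k_pos: "k > 0" for k
  proof -
    obtain N where N: "\<forall>u\<in>U N. (f ^^ k) u \<notin> U N"
      using return_in_Inter_closure[OF assms(1) continuous_on_funpow[OF assms(2,3)] assms(4,5)]
        no_return[OF k_pos] by blast
    show ?thesis
    proof (rule eventually_sequentiallyI)
      fix n assume "N \<le> n"
      then have "U n \<subseteq> U N" using \<open>decseq U\<close> by (simp add: decseq_def)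
      then show "\<forall>u\<in>U n. (f ^^ k) u \<notin> U n" using N by blast
    qed
  qed
  have K_bound: "\<forall>\<^sub>F n in sequentially. enat K < period f (U n)" for K
  proof -
    have "\<forall>\<^sub>F n in sequentially. \<forall>k\<in>{1..K}. \<forall>u\<in>U n. (f ^^ k) u \<notin> U n"
      using eventually_no_return by (simp add: eventually_ball_finite)
    then show ?thesis by (rule eventually_mono) (auto intro: enat_less_period)
  qed
  show "(\<lambda>n. period f (U n)) \<longlonglongrightarrow> \<infinity>"
    unfolding order_tendsto_iff
  proof (intro conjI allI impI)
    fix l :: enat assume "l < \<infinity>"
    then obtain K where "l = enat K" by (cases l) auto
    then show "\<forall>\<^sub>F n in sequentially. l < period f (U n)" using K_bound by simp
  qed simp
qed

theorem proposition6p2: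
  fixes M :: "'a::metric_space set" and f :: "'a \<Rightarrow> 'a"
    and U :: "nat \<Rightarrow> 'a set" and \<Lambda> :: "'a set"
  assumes "compact M"
    and "continuous_on M f" and "f ` M \<subseteq> M"
    and "\<And>n. U n \<subseteq> M"
    and "\<And>n. U (Suc n) \<subseteq> U n"
    and "\<Lambda> = (\<Inter>n. U n)"
    and "(\<Inter>n. U n) = (\<Inter>n. closure (U n))"
  shows "(\<lambda>n. period f (U n)) \<longlonglongrightarrow> \<infinity> \<longleftrightarrow>
         ((\<forall>x\<in>\<Lambda>. \<not> periodic_point f x) \<and>
          (\<forall>x\<in>M. \<forall>y z. y \<in> orbit f x \<inter> \<Lambda> \<and> z \<in> orbit f x \<inter> \<Lambda> \<longrightarrow> y = z))"
proof -
  have "decseq U" using assms(5) by (rule decseq_SucI)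
  then have "(\<lambda>n. period f (U n)) \<longlonglongrightarrow> \<infinity> \<longleftrightarrow> period f \<Lambda> = \<infinity>"
    using tendsto_period_infinity_iff assms by metis
  moreover have "\<Lambda> \<subseteq> M" using assms(4,6) by blast
  ultimately show ?thesis by (simp add: period_eq_infinity_iff_fundamental_domain)
qed

end
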